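(* In the setting of the context, take $\beta>0$ and $c>0$. Then for $\mu\in\mathbb{R}$ one has $i\mu\in\overline{W_{\overline{\mathbb{R}}\times\{\beta\}}(T)\setminus i\mathbb{R}}$ if and only if $\mu=0$ or $\mu$ is a real solution of $$q_\beta(\mu):=\mu^4+2d\mu^3+(2c+d^2)\mu^2+d\left(\frac{\beta}{2}+2c\right)\mu+c(\beta+c)=0.$$ The same statement holds also if $c=0$, with the exception that $0$ is then not in the set $\overline{W_{\overline{\mathbb{R}}\times\{\beta\}}(T)\setminus i\mathbb{R}}$.
   Context: Let $c\ge0$, $d>0$, $\delta_\pm:=\pm\sqrt{c-d^2/4}-id/2$ (principal square root). For real $\alpha,\beta$ let $p_{(\alpha,\beta)}(\omega):=(\alpha-\omega^2)(c-id\omega-\omega^2)-\beta\omega^2$ with roots $r_1,\dots,r_4$ labelled continuously in $(\alpha,\beta)\in\mathbb{R}^2$ and extended by limits to $\alpha=\pm\infty$ (where the roots are $\delta_+,\delta_-$ and $\infty$ twice), with values in the Riemann sphere $\overline{\mathbb{C}}$. For fixed $\beta$, $W_{\overline{\mathbb{R}}\times\{\beta\}}(T):=\bigcup_{n=1}^4\{r_n(\alpha,\beta):\alpha\in\mathbb{R}\cup\{\pm\infty\}\}$; the overline denotes closure in $\overline{\mathbb{C}}$. *)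

theory Defs
  imports "HOL-Analysis.Analysis"
begin

definition pT :: "real \<Rightarrow> real \<Rightarrow> real \<Rightarrow> real \<Rightarrow> complex \<Rightarrow> complex" where
  "pT c d \<alpha> \<beta> \<omega> =
     (of_real \<alpha> - \<omega>^2) * (of_real c - \<i> * of_real d * \<omega> - \<omega>^2) - of_real \<beta> * \<omega>^2"

definition delta_plus :: "real \<Rightarrow> real \<Rightarrow> complex" where
  "delta_plus c d = csqrt (of_real (c - d^2/4)) - \<i> * of_real (d/2)"

definition delta_minus :: "real \<Rightarrow> real \<Rightarrow> complex" where
  "delta_minus c d = - csqrt (of_real (c - d^2/4)) - \<i> * of_real (d/2)"

text \<open>Finite part of W over the extended real line times {beta}: all roots of p for
  real alpha (the union over the four continuously labelled root branches), together
  with the finite limit roots delta_plus, delta_minus at alpha = +-infinity.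
  The point infinity of the Riemann sphere is omitted.\<close>
definition W_fin :: "real \<Rightarrow> real \<Rightarrow> real \<Rightarrow> complex set" where
  "W_fin c d \<beta> = {\<omega>. \<exists>\<alpha>::real. pT c d \<alpha> \<beta> \<omega> = 0} \<union> {delta_plus c d, delta_minus c d}"

definition imag_axis :: "complex set" where
  "imag_axis = {z. Re z = 0}"

definition q_beta :: "real \<Rightarrow> real \<Rightarrow> real \<Rightarrow> real \<Rightarrow> real" where
  "q_beta c d \<beta> \<mu> = \<mu>^4 + 2*d*\<mu>^3 + (2*c + d^2)*\<mu>^2 + d*(\<beta>/2 + 2*c)*\<mu> + c*(\<beta> + c)"

end

theory Submission
  imports Defs
begin

text \<open>For \<open>\<omega> = x + iy\<close> with \<open>x \<noteq> 0\<close>, the equation \<open>pT c d \<alpha> \<beta> \<omega> = 0\<close> is linear in \<open>\<alpha>\<close>,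
  so it has a real solution iff \<open>cnj D \<cdot> (\<omega>\<^sup>2 D + \<beta> \<omega>\<^sup>2)\<close> is real, where
  \<open>D = c - i d \<omega> - \<omega>\<^sup>2\<close>; the zeros \<open>\<delta>\<^sub>\<plusminus>\<close> of \<open>D\<close> satisfy this condition as well. Hence
  \<open>W - i\<real>\<close> is the curve \<open>G(x\<^sup>2, y) = 0\<close>, \<open>x \<noteq> 0\<close>, for the real polynomial \<open>G = W_curve\<close>
  with \<open>G(0, y) = 2 y q\<^sub>\<beta>(y)\<close>. The curve is closed, which gives necessity. Conversely,
  at a zero of odd order of \<open>G(0, \<cdot>)\<close> the sign change persists for small \<open>x\<^sup>2\<close>, and by the
  intermediate value theorem the curve reaches \<open>i\<mu>\<close>; the only even order that occurs is a
  double root of \<open>q\<^sub>\<beta>\<close>, where the sign of \<open>G(x\<^sup>2, \<mu>)\<close> is opposite to the one of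
  \<open>G(0, \<cdot>)\<close> nearby. For \<open>c = 0\<close> the polynomial \<open>G\<close> factors as
  \<open>2 (u + y\<^sup>2) (y u + q\<^sub>\<beta>(y) / y)\<close>, and the second factor does not vanish at \<open>0\<close>.\<close>

lemma IVT_mult_nonpos:
  fixes g :: "real \<Rightarrow> real"
  assumes "continuous_on {a..b} g" "a \<le> b" "g a * g b \<le> 0"
  shows "\<exists>y\<in>{a..b}. g y = 0"
proof (cases "g a \<le> 0")
  case True
  then have "0 \<le> g b \<or> g a = 0" using assms(3) by (auto simp: mult_le_0_iff)
  then show ?thesis using IVT'[OF True _ assms(2,1)] assms(2) by fastforce
next
  case False
  then have "g b \<le> 0" using assms(3) by (auto simp: mult_le_0_iff)
  then show ?thesis using IVT2'[OF _ _ assms(2,1)] False by fastforce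
qed

text \<open>The first argument of \<open>F\<close> stands for \<open>(Re \<omega>)\<^sup>2\<close>, the second for \<open>Im \<omega>\<close>.\<close>
definition sign_changes_near :: "(real \<Rightarrow> real \<Rightarrow> real) \<Rightarrow> real \<Rightarrow> bool" where
  "sign_changes_near F \<mu> \<longleftrightarrow> (\<forall>e>0. \<exists>a b. a \<le> b \<and> \<bar>a - \<mu>\<bar> < e \<and> \<bar>b - \<mu>\<bar> < e
       \<and> (\<forall>\<^sub>F s in at_right 0. F s a * F s b < 0))"

lemma imag_point_in_closure_by_sign_changes:
  fixes F :: "real \<Rightarrow> real \<Rightarrow> real" and S :: "complex set"
  assumes cont: "\<And>s. continuous_on UNIV (F s)"
    and mem: "\<And>x y. x \<noteq> 0 \<Longrightarrow> F (x\<^sup>2) y = 0 \<Longrightarrow> Complex x y \<in> S"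
    and change: "sign_changes_near F \<mu>"
  shows "\<i> * of_real \<mu> \<in> closure S"
  unfolding closure_approachable
proof (intro allI impI)
  fix e :: real assume "e > 0"
  then obtain a b where ab: "a \<le> b" "\<bar>a - \<mu>\<bar> < e/2" "\<bar>b - \<mu>\<bar> < e/2"
    and sign: "\<forall>\<^sub>F s in at_right 0. F s a * F s b < 0"
    using change \<open>e > 0\<close> unfolding sign_changes_near_def by (meson half_gt_zero)
  have "\<forall>\<^sub>F s in at_right 0. s \<in> {0<..<(e/2)\<^sup>2}"
    using \<open>e > 0\<close> by (intro eventually_at_right_real) simp
  then obtain s where s: "0 < s" "s < (e/2)\<^sup>2" and "F s a * F s b < 0"
    using eventually_happens'[OF _ eventually_conj[OF _ sign]] by auto
  then obtain y where y: "y \<in> {a..b}" "F s y = 0"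
    using IVT_mult_nonpos[of a b "F s"] ab(1) continuous_on_subset[OF cont] by fastforce
  have "sqrt s < e/2" using real_sqrt_less_mono[OF s(2)] \<open>e > 0\<close> by simp
  have "Complex (sqrt s) y \<in> S" using mem[of "sqrt s" y] s y by simp
  moreover have "Complex (sqrt s) y - \<i> * of_real \<mu> = Complex (sqrt s) (y - \<mu>)"
    by (simp add: complex_eq_iff)
  then have "dist (Complex (sqrt s) y) (\<i> * of_real \<mu>) \<le> sqrt s + \<bar>y - \<mu>\<bar>"
    using cmod_le[of "Complex (sqrt s) (y - \<mu>)"] s(1) by (simp add: dist_norm)
  moreover have "\<bar>y - \<mu>\<bar> < e/2" using y ab unfolding abs_less_iff by auto
  ultimately show "\<exists>\<omega>\<in>S. dist \<omega> (\<i> * of_real \<mu>) < e"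
    using \<open>sqrt s < e/2\<close> by force
qed

lemma eventually_at_right_0_neg:
  fixes f :: "real \<Rightarrow> real"
  assumes "isCont f 0" "f 0 < 0"
  shows "\<forall>\<^sub>F s in at_right 0. f s < 0"
  using order_tendstoD(2)[OF assms(1)[unfolded continuous_at] assms(2)]
  by (simp add: eventually_at_split)

lemma sign_preserving_radius:
  fixes R :: "real \<Rightarrow> real"
  assumes "isCont R 0" "R 0 \<noteq> 0"
  obtains \<delta> where "\<delta> > 0" "\<And>t. \<bar>t\<bar> < \<delta> \<Longrightarrow> R t * R 0 > 0"
proof -
  have "isCont (\<lambda>t. R t * R 0) 0" using assms(1) by (intro continuous_intros)
  moreover have "R 0 * R 0 > 0" using assms(2) by (auto simp: zero_less_mult_iff)
  ultimately have "\<forall>\<^sub>F t in at 0. R t * R 0 > 0"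
    unfolding continuous_at by (rule order_tendstoD(1))
  then obtain \<delta> where "\<delta> > 0" "\<And>t. t \<noteq> 0 \<Longrightarrow> \<bar>t\<bar> < \<delta> \<Longrightarrow> R t * R 0 > 0"
    unfolding eventually_at by (auto simp: dist_real_def)
  with \<open>R 0 * R 0 > 0\<close> show ?thesis using that by (metis abs_zero)
qed

lemma sign_change_at_odd_order_zero:
  fixes F :: "real \<Rightarrow> real \<Rightarrow> real" and R :: "real \<Rightarrow> real"
  assumes cont: "\<And>y. isCont (\<lambda>s. F s y) 0"
    and expand: "\<And>t. F 0 (\<mu> + t) = t ^ k * R t" and "odd k"
    and "isCont R 0" "R 0 \<noteq> 0"
  shows "sign_changes_near F \<mu>"
  unfolding sign_changes_near_def
proof (intro allI impI)
  fix e :: real assume "e > 0"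
  obtain \<delta> where "\<delta> > 0" and \<delta>: "\<And>t. \<bar>t\<bar> < \<delta> \<Longrightarrow> R t * R 0 > 0"
    using sign_preserving_radius[OF assms(4,5)] by blast
  define t where "t = min \<delta> e / 2"
  have t: "0 < t" "t < \<delta>" "t < e" using \<open>\<delta> > 0\<close> \<open>e > 0\<close> by (auto simp: t_def)
  have "R t * R (-t) > 0"
    using \<delta>[of t] \<delta>[of "-t"] t by (auto simp: zero_less_mult_iff)
  moreover have "F 0 (\<mu> - t) = - (t ^ k) * R (-t)"
    using expand[of "-t"] \<open>odd k\<close> by (simp add: power_minus_odd)
  then have "F 0 (\<mu> - t) * F 0 (\<mu> + t) = - (t ^ k)\<^sup>2 * (R t * R (-t))"
    by (simp add: expand power2_eq_square algebra_simps)
  ultimately have "F 0 (\<mu> - t) * F 0 (\<mu> + t) < 0"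
    using t by (simp add: mult_neg_pos)
  then have "\<forall>\<^sub>F s in at_right 0. F s (\<mu> - t) * F s (\<mu> + t) < 0"
    using cont by (intro eventually_at_right_0_neg continuous_intros)
  then show "\<exists>a b. a \<le> b \<and> \<bar>a - \<mu>\<bar> < e \<and> \<bar>b - \<mu>\<bar> < e \<and> (\<forall>\<^sub>F s in at_right 0. F s a * F s b < 0)"
    using t by (intro exI[of _ "\<mu> - t"] exI[of _ "\<mu> + t"]) auto
qed

lemma sign_change_at_double_zero:
  fixes F :: "real \<Rightarrow> real \<Rightarrow> real" and R B :: "real \<Rightarrow> real"
  assumes cont: "\<And>y. isCont (\<lambda>s. F s y) 0"
    and expand: "\<And>t. F 0 (\<mu> + t) = t\<^sup>2 * R t" and "isCont R 0"
    and slope: "\<And>s. F s \<mu> = s * B s" and "isCont B 0"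
    and opposite: "B 0 * R 0 < 0"
  shows "sign_changes_near F \<mu>"
  unfolding sign_changes_near_def
proof (intro allI impI)
  fix e :: real assume "e > 0"
  obtain \<delta> where "\<delta> > 0" and \<delta>: "\<And>t. \<bar>t\<bar> < \<delta> \<Longrightarrow> R t * R 0 > 0"
    using sign_preserving_radius[OF assms(3)] opposite by (metis mult_zero_right order_less_irrefl)
  define t where "t = min \<delta> e / 2"
  have t: "0 < t" "t < \<delta>" "t < e" using \<open>\<delta> > 0\<close> \<open>e > 0\<close> by (auto simp: t_def)
  have "B 0 * R t < 0"
    using \<delta>[of t] t opposite by (auto simp: zero_less_mult_iff mult_less_0_iff)
  moreover have "B 0 * F 0 (\<mu> + t) = t\<^sup>2 * (B 0 * R t)"
    unfolding expand by (rule mult.left_commute)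
  ultimately have "B 0 * F 0 (\<mu> + t) < 0"
    using t by (simp only:) (simp add: mult_pos_neg)
  then have "\<forall>\<^sub>F s in at_right 0. B s * F s (\<mu> + t) < 0"
    using cont \<open>isCont B 0\<close> by (intro eventually_at_right_0_neg continuous_intros)
  then have "\<forall>\<^sub>F s in at_right 0. F s \<mu> * F s (\<mu> + t) < 0"
    using eventually_at_right_less[of 0]
  proof eventually_elim
    case (elim s)
    then show ?case using mult_pos_neg[of s "B s * F s (\<mu> + t)"] by (simp add: slope mult.assoc)
  qed
  then show "\<exists>a b. a \<le> b \<and> \<bar>a - \<mu>\<bar> < e \<and> \<bar>b - \<mu>\<bar> < e \<and> (\<forall>\<^sub>F s in at_right 0. F s a * F s b < 0)"
    using t by (intro exI[of _ \<mu>] exI[of _ "\<mu> + t"]) auto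
qed

definition quad_factor :: "real \<Rightarrow> real \<Rightarrow> complex \<Rightarrow> complex" where
  "quad_factor c d \<omega> = of_real c - \<i> * of_real d * \<omega> - \<omega>\<^sup>2"

definition W_curve :: "real \<Rightarrow> real \<Rightarrow> real \<Rightarrow> real \<Rightarrow> real \<Rightarrow> real" where
  "W_curve c d \<beta> u y =
     2*y*u\<^sup>2 + u*(2*y*(2*y\<^sup>2 + 2*d*y + d\<^sup>2 - 2*c) + \<beta>*d) + 2*y*q_beta c d \<beta> y"

lemma pT_eq_quad_factor:
  "pT c d \<alpha> \<beta> \<omega> = of_real \<alpha> * quad_factor c d \<omega> - (\<omega>\<^sup>2 * quad_factor c d \<omega> + of_real \<beta> * \<omega>\<^sup>2)"
  unfolding pT_def quad_factor_def by (simp add: algebra_simps)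

lemma quad_factor_eq_delta_product:
  "quad_factor c d \<omega> = - ((\<omega> - delta_plus c d) * (\<omega> - delta_minus c d))"
proof -
  let ?s = "csqrt (of_real (c - d\<^sup>2/4))"
  have "(\<omega> - delta_plus c d) * (\<omega> - delta_minus c d) = (\<omega> + \<i> * of_real (d/2))\<^sup>2 - ?s\<^sup>2"
    unfolding delta_plus_def delta_minus_def by (simp add: algebra_simps power2_eq_square)
  also have "\<dots> = - quad_factor c d \<omega>"
    unfolding power2_csqrt quad_factor_def by (simp add: algebra_simps power2_eq_square)
  finally show ?thesis by simp
qed

lemma Im_cnj_quad_factor_mult:
  "Im (cnj (quad_factor c d \<omega>) * (\<omega>\<^sup>2 * quad_factor c d \<omega> + of_real \<beta> * \<omega>\<^sup>2))
     = Re \<omega> * W_curve c d \<beta> ((Re \<omega>)\<^sup>2) (Im \<omega>)"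
proof -
  obtain x y where "\<omega> = Complex x y" by (cases \<omega>)
  then show ?thesis unfolding quad_factor_def W_curve_def q_beta_def
    by (simp add: power2_eq_square power3_eq_cube power4_eq_xxxx algebra_simps)
qed

lemma W_fin_minus_imag_axis:
  "W_fin c d \<beta> - imag_axis = {\<omega>. Re \<omega> \<noteq> 0 \<and> W_curve c d \<beta> ((Re \<omega>)\<^sup>2) (Im \<omega>) = 0}"
proof (intro set_eqI iffI)
  fix \<omega> assume \<omega>: "\<omega> \<in> W_fin c d \<beta> - imag_axis"
  let ?D = "quad_factor c d \<omega>" and ?S = "\<omega>\<^sup>2 * quad_factor c d \<omega> + of_real \<beta> * \<omega>\<^sup>2"
  have "Im (cnj ?D * ?S) = 0"
  proof (cases "?D = 0")
    case False
    with \<omega> obtain \<alpha> where "pT c d \<alpha> \<beta> \<omega> = 0"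
      unfolding W_fin_def quad_factor_eq_delta_product by auto
    then have "?S = of_real \<alpha> * ?D" unfolding pT_eq_quad_factor by simp
    then have "cnj ?D * ?S = of_real \<alpha> * (?D * cnj ?D)" by (simp add: ac_simps)
    then show ?thesis by (simp add: complex_mult_cnj)
  qed simp
  then have "Re \<omega> * W_curve c d \<beta> ((Re \<omega>)\<^sup>2) (Im \<omega>) = 0"
    by (metis Im_cnj_quad_factor_mult)
  with \<omega> show "\<omega> \<in> {\<omega>. Re \<omega> \<noteq> 0 \<and> W_curve c d \<beta> ((Re \<omega>)\<^sup>2) (Im \<omega>) = 0}"
    by (simp add: imag_axis_def)
next
  fix \<omega> assume \<omega>: "\<omega> \<in> {\<omega>. Re \<omega> \<noteq> 0 \<and> W_curve c d \<beta> ((Re \<omega>)\<^sup>2) (Im \<omega>) = 0}"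
  let ?D = "quad_factor c d \<omega>" and ?S = "\<omega>\<^sup>2 * quad_factor c d \<omega> + of_real \<beta> * \<omega>\<^sup>2"
  have "\<omega> \<in> W_fin c d \<beta>"
  proof (cases "?D = 0")
    case True
    then show ?thesis unfolding W_fin_def quad_factor_eq_delta_product by auto
  next
    case False
    have "Im (cnj ?D * ?S) = 0" unfolding Im_cnj_quad_factor_mult using \<omega> by simp
    then have "Im (?S / ?D) = 0" by (simp add: Im_divide algebra_simps)
    then have "?S / ?D = of_real (Re (?S / ?D))" by (simp add: complex_eq_iff)
    then have "?S = of_real (Re (?S / ?D)) * ?D" using False by (metis nonzero_divide_eq_eq)
    then have "pT c d (Re (?S / ?D)) \<beta> \<omega> = 0" unfolding pT_eq_quad_factor by simp
    then show ?thesis unfolding W_fin_def by blast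
  qed
  with \<omega> show "\<omega> \<in> W_fin c d \<beta> - imag_axis" by (simp add: imag_axis_def)
qed

lemma W_curve_on_axis: "W_curve c d \<beta> 0 y = 2 * y * q_beta c d \<beta> y"
  by (simp add: W_curve_def)

lemma isCont_W_curve: "isCont (\<lambda>u. W_curve c d \<beta> u y) u"
  unfolding W_curve_def q_beta_def by (intro continuous_intros)

lemma continuous_on_W_curve: "continuous_on A (W_curve c d \<beta> u)"
  unfolding W_curve_def q_beta_def by (intro continuous_intros)

lemma q_beta_taylor:
  "q_beta c d \<beta> (\<mu> + t) = q_beta c d \<beta> \<mu>
     + (4*\<mu>^3 + 6*d*\<mu>\<^sup>2 + 2*(2*c + d\<^sup>2)*\<mu> + d*(\<beta>/2 + 2*c))*t
     + (6*\<mu>\<^sup>2 + 6*d*\<mu> + 2*c + d\<^sup>2)*t\<^sup>2 + (4*\<mu> + 2*d)*t^3 + t^4"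
  unfolding q_beta_def by (simp add: algebra_simps power2_eq_square power3_eq_cube power4_eq_xxxx)

lemma q_beta_double_root:
  assumes "d > 0" "\<beta> > 0" "q_beta c d \<beta> \<mu> = 0"
    and deriv: "4*\<mu>^3 + 6*d*\<mu>\<^sup>2 + 2*(2*c + d\<^sup>2)*\<mu> + d*(\<beta>/2 + 2*c) = 0"
  shows "3*(2*\<mu>*(2*\<mu>\<^sup>2 + 2*d*\<mu> + d\<^sup>2 - 2*c) + \<beta>*d) = -2*\<mu>*(6*\<mu>\<^sup>2 + 6*d*\<mu> + 2*c + d\<^sup>2)"
proof -
  define E where "E = \<mu>\<^sup>2 + d*\<mu> + c"
  have "4*\<mu>^3 + 6*d*\<mu>\<^sup>2 + 2*(2*c + d\<^sup>2)*\<mu> + d*(\<beta>/2 + 2*c) = 2*E*(2*\<mu> + d) + \<beta>*d/2"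
    unfolding E_def by (simp add: algebra_simps power2_eq_square power3_eq_cube)
  then have \<beta>d: "\<beta>*d = -4*E*(2*\<mu> + d)" using deriv by simp
  have "d * q_beta c d \<beta> \<mu> = d*E\<^sup>2 + (\<beta>*d)*(c + d*\<mu>/2)"
    unfolding E_def q_beta_def by (simp add: algebra_simps power2_eq_square power3_eq_cube power4_eq_xxxx)
  also have "\<dots> = E * (d*E - 2*(2*\<mu> + d)*(2*c + d*\<mu>))"
    unfolding \<beta>d by (simp add: algebra_simps power2_eq_square)
  finally have "E * (d*E - 2*(2*\<mu> + d)*(2*c + d*\<mu>)) = 0" using assms(3) by simp
  moreover have "E \<noteq> 0" using \<beta>d assms(1,2) by auto
  ultimately have "d*E - 2*(2*\<mu> + d)*(2*c + d*\<mu>) = 0" by simp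
  moreover have "3*(2*\<mu>*(2*\<mu>\<^sup>2 + 2*d*\<mu> + d\<^sup>2 - 2*c) + \<beta>*d) + 2*\<mu>*(6*\<mu>\<^sup>2 + 6*d*\<mu> + 2*c + d\<^sup>2)
      = 4*(d*E - 2*(2*\<mu> + d)*(2*c + d*\<mu>))"
    unfolding \<beta>d E_def by (simp add: algebra_simps power2_eq_square power3_eq_cube)
  ultimately show ?thesis by simp
qed

lemma W_curve_sign_changes_at_0:
  assumes "c > 0" "\<beta> > 0"
  shows "sign_changes_near (W_curve c d \<beta>) 0"
proof (rule sign_change_at_odd_order_zero[where R="\<lambda>t. 2 * q_beta c d \<beta> t" and k=1])
  show "W_curve c d \<beta> 0 (0 + t) = t ^ 1 * (2 * q_beta c d \<beta> t)" for t
    by (simp add: W_curve_on_axis)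
  show "2 * q_beta c d \<beta> 0 \<noteq> 0" using assms by (simp add: q_beta_def)
qed (auto simp: q_beta_def intro: isCont_W_curve intro!: continuous_intros)

lemma W_curve_sign_changes_at_root:
  assumes "d > 0" "\<beta> > 0" "\<mu> \<noteq> 0" "q_beta c d \<beta> \<mu> = 0"
  shows "sign_changes_near (W_curve c d \<beta>) \<mu>"
proof -
  define q1 where "q1 = 4*\<mu>^3 + 6*d*\<mu>\<^sup>2 + 2*(2*c + d\<^sup>2)*\<mu> + d*(\<beta>/2 + 2*c)"
  define q2 where "q2 = 6*\<mu>\<^sup>2 + 6*d*\<mu> + 2*c + d\<^sup>2"
  define q3 where "q3 = 4*\<mu> + 2*d"
  have expand: "W_curve c d \<beta> 0 (\<mu> + t) = t * 2*(\<mu> + t)*(q1 + q2*t + q3*t\<^sup>2 + t^3)" for t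
    unfolding W_curve_on_axis q_beta_taylor q1_def q2_def q3_def assms(4)
    by (simp add: algebra_simps power2_eq_square power3_eq_cube power4_eq_xxxx)
  consider "q1 \<noteq> 0" | "q1 = 0" "q2 \<noteq> 0" | "q1 = 0" "q2 = 0" by blast
  then show ?thesis
  proof cases
    case 1
    then show ?thesis using assms(3)
      by (intro sign_change_at_odd_order_zero[where R="\<lambda>t. 2*(\<mu> + t)*(q1 + q2*t + q3*t\<^sup>2 + t^3)" and k=1]
            isCont_W_curve) (auto simp: expand intro!: continuous_intros)
  next
    case 2
    define b where "b = 2*\<mu>*(2*\<mu>\<^sup>2 + 2*d*\<mu> + d\<^sup>2 - 2*c) + \<beta>*d"
    have "3*b = -2*\<mu>*q2"
      using q_beta_double_root[OF assms(1,2,4)] 2 unfolding b_def q1_def q2_def by simp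
    then have "b = -2*\<mu>*q2/3" by simp
    then have "(2*\<mu>*0 + b) * (2*(\<mu> + 0)*(q2 + q3*0 + 0\<^sup>2)) = - (4/3) * (\<mu>*q2)\<^sup>2"
      by (simp add: power2_eq_square algebra_simps)
    moreover have "(\<mu>*q2)\<^sup>2 > 0" using 2 assms(3) by simp
    ultimately have opposite: "(2*\<mu>*0 + b) * (2*(\<mu> + 0)*(q2 + q3*0 + 0\<^sup>2)) < 0" by simp
    show ?thesis
    proof (rule sign_change_at_double_zero[where R="\<lambda>t. 2*(\<mu> + t)*(q2 + q3*t + t\<^sup>2)"
          and B="\<lambda>u. 2*\<mu>*u + b", OF isCont_W_curve _ _ _ _ opposite])
      show "W_curve c d \<beta> 0 (\<mu> + t) = t\<^sup>2 * (2*(\<mu> + t)*(q2 + q3*t + t\<^sup>2))" for t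
        unfolding expand 2 by (simp add: algebra_simps power2_eq_square power3_eq_cube)
      show "W_curve c d \<beta> u \<mu> = u * (2*\<mu>*u + b)" for u
        unfolding W_curve_def b_def assms(4) by (simp add: algebra_simps power2_eq_square)
    qed (auto intro!: continuous_intros)
  next
    case 3
    have "q3 \<noteq> 0"
    proof
      assume "q3 = 0"
      then have "\<mu> = -d/2" unfolding q3_def by simp
      then have "q1 = d*\<beta>/2" unfolding q1_def by (simp add: algebra_simps power2_eq_square power3_eq_cube)
      then show False using 3 assms(1,2) by simp
    qed
    have "W_curve c d \<beta> 0 (\<mu> + t) = t^3 * (2*(\<mu> + t)*(q3 + t))" for t
      unfolding expand 3 by (simp add: algebra_simps power2_eq_square power3_eq_cube)
    then show ?thesis using \<open>q3 \<noteq> 0\<close> assms(3)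
      by (intro sign_change_at_odd_order_zero[where R="\<lambda>t. 2*(\<mu> + t)*(q3 + t)" and k=3]
            isCont_W_curve) (auto intro!: continuous_intros)
  qed
qed

lemma closure_W_fin_minus_imag_axis_subset:
  "closure (W_fin c d \<beta> - imag_axis) \<subseteq> {\<omega>. W_curve c d \<beta> ((Re \<omega>)\<^sup>2) (Im \<omega>) = 0}"
proof (rule closure_minimal)
  show "closed {\<omega>. W_curve c d \<beta> ((Re \<omega>)\<^sup>2) (Im \<omega>) = 0}"
    unfolding W_curve_def q_beta_def by (intro closed_Collect_eq continuous_intros)
qed (auto simp: W_fin_minus_imag_axis)

lemma imag_point_in_closure_W_fin:
  assumes "sign_changes_near (W_curve c d \<beta>) \<mu>"
  shows "\<i> * of_real \<mu> \<in> closure (W_fin c d \<beta> - imag_axis)"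
  by (rule imag_point_in_closure_by_sign_changes[OF continuous_on_W_curve _ assms])
    (simp add: W_fin_minus_imag_axis)

definition q0_cubic :: "real \<Rightarrow> real \<Rightarrow> real \<Rightarrow> real" where
  "q0_cubic d \<beta> y = y^3 + 2*d*y\<^sup>2 + d\<^sup>2*y + d*\<beta>/2"

lemma q_beta_c0: "q_beta 0 d \<beta> y = y * q0_cubic d \<beta> y"
  unfolding q_beta_def q0_cubic_def
  by (simp add: algebra_simps power2_eq_square power3_eq_cube power4_eq_xxxx)

lemma W_curve_c0: "W_curve 0 d \<beta> u y = 2 * (u + y\<^sup>2) * (y*u + q0_cubic d \<beta> y)"
  unfolding W_curve_def q_beta_def q0_cubic_def
  by (simp add: algebra_simps power2_eq_square power3_eq_cube power4_eq_xxxx)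

lemma closure_W_fin_minus_imag_axis_subset_c0:
  "closure (W_fin 0 d \<beta> - imag_axis) \<subseteq> {\<omega>. Im \<omega> * (Re \<omega>)\<^sup>2 + q0_cubic d \<beta> (Im \<omega>) = 0}"
proof (rule closure_minimal)
  show "closed {\<omega>. Im \<omega> * (Re \<omega>)\<^sup>2 + q0_cubic d \<beta> (Im \<omega>) = 0}"
    unfolding q0_cubic_def by (intro closed_Collect_eq continuous_intros)
  show "W_fin 0 d \<beta> - imag_axis \<subseteq> {\<omega>. Im \<omega> * (Re \<omega>)\<^sup>2 + q0_cubic d \<beta> (Im \<omega>) = 0}"
  proof
    fix \<omega> assume "\<omega> \<in> W_fin 0 d \<beta> - imag_axis"
    then have "Re \<omega> \<noteq> 0"
      and "2 * ((Re \<omega>)\<^sup>2 + (Im \<omega>)\<^sup>2) * (Im \<omega> * (Re \<omega>)\<^sup>2 + q0_cubic d \<beta> (Im \<omega>)) = 0"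
      by (simp_all add: W_fin_minus_imag_axis W_curve_c0)
    moreover have "(Re \<omega>)\<^sup>2 + (Im \<omega>)\<^sup>2 > 0" using \<open>Re \<omega> \<noteq> 0\<close> by (simp add: sum_power2_gt_zero_iff)
    ultimately show "\<omega> \<in> {\<omega>. Im \<omega> * (Re \<omega>)\<^sup>2 + q0_cubic d \<beta> (Im \<omega>) = 0}" by simp
  qed
qed

lemma imag_point_in_closure_W_fin_iff:
  assumes "c > 0" "d > 0" "\<beta> > 0"
  shows "\<i> * of_real \<mu> \<in> closure (W_fin c d \<beta> - imag_axis) \<longleftrightarrow> \<mu> = 0 \<or> q_beta c d \<beta> \<mu> = 0"
proof
  assume "\<i> * of_real \<mu> \<in> closure (W_fin c d \<beta> - imag_axis)"
  then have "W_curve c d \<beta> ((Re (\<i> * of_real \<mu>))\<^sup>2) (Im (\<i> * of_real \<mu>)) = 0"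
    using closure_W_fin_minus_imag_axis_subset by blast
  then show "\<mu> = 0 \<or> q_beta c d \<beta> \<mu> = 0" by (simp add: W_curve_on_axis)
next
  assume "\<mu> = 0 \<or> q_beta c d \<beta> \<mu> = 0"
  then have "sign_changes_near (W_curve c d \<beta>) \<mu>"
    using W_curve_sign_changes_at_0 W_curve_sign_changes_at_root assms by (cases "\<mu> = 0") auto
  then show "\<i> * of_real \<mu> \<in> closure (W_fin c d \<beta> - imag_axis)"
    by (rule imag_point_in_closure_W_fin)
qed

lemma imag_point_in_closure_W_fin_iff_c0:
  assumes "d > 0" "\<beta> > 0"
  shows "\<i> * of_real \<mu> \<in> closure (W_fin 0 d \<beta> - imag_axis) \<longleftrightarrow> \<mu> \<noteq> 0 \<and> q_beta 0 d \<beta> \<mu> = 0"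
proof
  assume "\<i> * of_real \<mu> \<in> closure (W_fin 0 d \<beta> - imag_axis)"
  then have "Im (\<i> * of_real \<mu>) * (Re (\<i> * of_real \<mu>))\<^sup>2 + q0_cubic d \<beta> (Im (\<i> * of_real \<mu>)) = 0"
    using closure_W_fin_minus_imag_axis_subset_c0 by blast
  then have "q0_cubic d \<beta> \<mu> = 0" by simp
  moreover have "q0_cubic d \<beta> 0 \<noteq> 0" using assms by (simp add: q0_cubic_def)
  ultimately show "\<mu> \<noteq> 0 \<and> q_beta 0 d \<beta> \<mu> = 0" by (auto simp: q_beta_c0)
next
  assume "\<mu> \<noteq> 0 \<and> q_beta 0 d \<beta> \<mu> = 0"
  then show "\<i> * of_real \<mu> \<in> closure (W_fin 0 d \<beta> - imag_axis)"
    by (intro imag_point_in_closure_W_fin W_curve_sign_changes_at_root) (use assms in auto)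
qed

theorem proposition3p2:
  fixes c d \<beta> :: real
  assumes "c \<ge> 0" and "d > 0" and "\<beta> > 0"
  shows "(c > 0 \<longrightarrow> (\<forall>\<mu>::real.
            \<i> * of_real \<mu> \<in> closure (W_fin c d \<beta> - imag_axis)
            \<longleftrightarrow> (\<mu> = 0 \<or> q_beta c d \<beta> \<mu> = 0)))
       \<and> (c = 0 \<longrightarrow> (\<forall>\<mu>::real.
            \<i> * of_real \<mu> \<in> closure (W_fin c d \<beta> - imag_axis)
            \<longleftrightarrow> (\<mu> \<noteq> 0 \<and> q_beta c d \<beta> \<mu> = 0)))"
  using imag_point_in_closure_W_fin_iff[OF _ assms(2,3)] imag_point_in_closure_W_fin_iff_c0[OF assms(2,3)]
  by blast

end
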